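(* Let $(X,d)$ be a metric space with a II-modulus of total boundedness $\gamma$, and let $(x_n),(y_n)$ be sequences in $X$. Define recursively $n_0:=0$ and $$n_{k+1}:=\left\lceil \max_{i,j\le k}\{n_k,\ d(x_{n_i},y_{n_j}),\ d(x_{n_i},x_{n_j}),\ d(y_{n_i},y_{n_j})\}+3\right\rceil .$$ Then there exists $N\le n_{\gamma(0)}$ with $d(x_N,y_N)<N$.
   Context: $\mathbb{N}$ includes $0$. A map $\gamma:\mathbb{N}\to\mathbb{N}$ is a II-modulus of total boundedness for $X$ if for every $k\in\mathbb{N}$ and every sequence $(z_n)$ in $X$ there exist $0\le i<j\le\gamma(k)$ with $d(z_i,z_j)\le\frac1{k+1}$. *)

theory Defs
  imports "HOL-Analysis.Analysis"
begin

definition II_modulus :: "'a::metric_space set \<Rightarrow> (nat \<Rightarrow> nat) \<Rightarrow> bool" where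
  "II_modulus X \<gamma> \<longleftrightarrow>
     (\<forall>k. \<forall>z::nat \<Rightarrow> 'a. (\<forall>n. z n \<in> X) \<longrightarrow>
        (\<exists>i j. i < j \<and> j \<le> \<gamma> k \<and> dist (z i) (z j) \<le> 1 / (real k + 1)))"

text \<open>Given the list l = [n_0, ..., n_k], compute n_(k+1).\<close>
definition next_idx :: "(nat \<Rightarrow> 'a::metric_space) \<Rightarrow> (nat \<Rightarrow> 'a) \<Rightarrow> nat list \<Rightarrow> nat" where
  "next_idx x y l = nat \<lceil>Max ({real (last l)}
       \<union> {dist (x (l ! i)) (y (l ! j)) | i j. i < length l \<and> j < length l}
       \<union> {dist (x (l ! i)) (x (l ! j)) | i j. i < length l \<and> j < length l}
       \<union> {dist (y (l ! i)) (y (l ! j)) | i j. i < length l \<and> j < length l}) + 3\<rceil>"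

primrec idx_list :: "(nat \<Rightarrow> 'a::metric_space) \<Rightarrow> (nat \<Rightarrow> 'a) \<Rightarrow> nat \<Rightarrow> nat list" where
  "idx_list x y 0 = [0]"
| "idx_list x y (Suc k) = idx_list x y k @ [next_idx x y (idx_list x y k)]"

definition idx :: "(nat \<Rightarrow> 'a::metric_space) \<Rightarrow> (nat \<Rightarrow> 'a) \<Rightarrow> nat \<Rightarrow> nat" where
  "idx x y k = idx_list x y k ! k"

end

theory Submission
  imports Defs
begin

text \<open>Suppose d(x_N, y_N) \<ge> N for all N \<le> n_\<gamma>(0). By construction, all points x_(n_i), y_(n_i) with
  i < k lie within n_k - 3 of each other, while x_(n_k) and y_(n_k) are at least n_k apart. So at most
  one of x_(n_k), y_(n_k) can be within 1 of an earlier point; choosing the other one for every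
  k \<le> \<gamma>(0) yields a sequence in X whose first \<gamma>(0) + 1 terms are pairwise more than 1 apart,
  contradicting the modulus at k = 0.\<close>

lemma one_far_from_small_set:
  fixes a b :: "'a::metric_space"
  assumes small: "\<And>p q. p \<in> F \<Longrightarrow> q \<in> F \<Longrightarrow> dist p q + 3 \<le> r"
    and far: "r \<le> dist a b"
  shows "\<exists>c\<in>{a, b}. \<forall>p\<in>F. 1 < dist c p"
proof (rule ccontr)
  assume "\<not> ?thesis"
  then obtain p q where "p \<in> F" "q \<in> F" "dist a p \<le> 1" "dist b q \<le> 1"
    by (auto simp: not_less)
  moreover have "dist a b \<le> dist a p + dist p q + dist q b"
    by (metis add.commute add_le_cancel_left dist_triangle dist_triangle2 order_trans)
  ultimately show False
    using small[of p q] far by (simp add: dist_commute)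
qed

lemma length_idx_list [simp]: "length (idx_list x y k) = Suc k"
  by (induction k) auto

lemma nth_idx_list: "i \<le> k \<Longrightarrow> idx_list x y k ! i = idx x y i"
proof (induction k)
  case 0
  then show ?case by (simp add: idx_def)
next
  case (Suc k)
  then show ?case
    by (cases "i = Suc k") (simp_all add: idx_def nth_append)
qed

lemma last_idx_list: "last (idx_list x y k) = idx x y k"
  by (cases k) (simp_all add: idx_def nth_append)

lemma idx_Suc: "idx x y (Suc k) = next_idx x y (idx_list x y k)"
  by (simp add: idx_def nth_append)

lemma candidate_le_next_idx:
  fixes x y :: "nat \<Rightarrow> 'a::metric_space"
  assumes "v = real (last l) \<or> (\<exists>i j. i < length l \<and> j < length l \<and>
             v \<in> {dist (x (l ! i)) (y (l ! j)), dist (x (l ! i)) (x (l ! j)), dist (y (l ! i)) (y (l ! j))})"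
  shows "v + 3 \<le> real (next_idx x y l)"
proof -
  define S where "S = {real (last l)}
       \<union> {dist (x (l ! i)) (y (l ! j)) | i j. i < length l \<and> j < length l}
       \<union> {dist (x (l ! i)) (x (l ! j)) | i j. i < length l \<and> j < length l}
       \<union> {dist (y (l ! i)) (y (l ! j)) | i j. i < length l \<and> j < length l}"
  have "finite S"
    unfolding S_def by (auto intro!: finite_image_set2)
  moreover have "v \<in> S"
    using assms unfolding S_def by blast
  ultimately have "v \<le> Max S" by simp
  moreover have "Max S + 3 \<le> real (nat \<lceil>Max S + 3\<rceil>)" by linarith
  ultimately show ?thesis
    by (simp add: next_idx_def S_def)
qed

lemma last_le_next_idx: "real (last l) + 3 \<le> real (next_idx x y l)"
  by (rule candidate_le_next_idx) simp

lemma dist_le_next_idx: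
  assumes "i < length l" "j < length l"
    and "p \<in> {x (l ! i), y (l ! i)}" "q \<in> {x (l ! j), y (l ! j)}"
  shows "dist p q + 3 \<le> real (next_idx x y l)"
proof -
  have "p = y (l ! i) \<Longrightarrow> q = x (l ! j) \<Longrightarrow> ?thesis"
    using candidate_le_next_idx[of "dist q p" l x y] assms(1,2) by (auto simp: dist_commute)
  moreover have "\<not> (p = y (l ! i) \<and> q = x (l ! j)) \<Longrightarrow> ?thesis"
    by (rule candidate_le_next_idx) (use assms in blast)
  ultimately show ?thesis by blast
qed

lemma idx_Suc_ge: "idx x y k + 3 \<le> idx x y (Suc k)"
  using last_le_next_idx[of "idx_list x y k" x y] by (simp add: idx_Suc last_idx_list)

lemma idx_mono:
  assumes "k \<le> m"
  shows "idx x y k \<le> idx x y m"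
proof (rule lift_Suc_mono_le[OF _ assms])
  show "idx x y n \<le> idx x y (Suc n)" for n
    using idx_Suc_ge[of x y n] by linarith
qed

definition earlier_points :: "(nat \<Rightarrow> 'a::metric_space) \<Rightarrow> (nat \<Rightarrow> 'a) \<Rightarrow> nat \<Rightarrow> 'a set" where
  "earlier_points x y k = (\<lambda>i. x (idx x y i)) ` {..<k} \<union> (\<lambda>i. y (idx x y i)) ` {..<k}"

lemma earlier_points_close:
  assumes "p \<in> earlier_points x y k" "q \<in> earlier_points x y k"
  shows "dist p q + 3 \<le> real (idx x y k)"
proof -
  obtain m where k: "k = Suc m"
    using assms by (cases k) (auto simp: earlier_points_def)
  from assms obtain i j where "i < k" "j < k"
      "p \<in> {x (idx x y i), y (idx x y i)}" "q \<in> {x (idx x y j), y (idx x y j)}"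
    by (auto simp: earlier_points_def)
  then have "dist p q + 3 \<le> real (next_idx x y (idx_list x y m))"
    by (intro dist_le_next_idx[where i=i and j=j and l="idx_list x y m"]) (simp_all add: k nth_idx_list)
  then show ?thesis
    by (simp add: k idx_Suc)
qed

theorem proposition2p5:
  fixes X :: "'a::metric_space set" and \<gamma> :: "nat \<Rightarrow> nat" and x y :: "nat \<Rightarrow> 'a"
  assumes "II_modulus X \<gamma>"
    and "\<And>n. x n \<in> X" and "\<And>n. y n \<in> X"
  shows "\<exists>N \<le> idx x y (\<gamma> 0). dist (x N) (y N) < real N"
proof (rule ccontr)
  assume contra: "\<not> ?thesis"
  have far: "real (idx x y k) \<le> dist (x (idx x y k)) (y (idx x y k))" if "k \<le> \<gamma> 0" for k
    using contra idx_mono[OF that, of x y] by (meson not_less)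
  have "\<exists>c \<in> {x (idx x y k), y (idx x y k)}. k \<le> \<gamma> 0 \<longrightarrow> (\<forall>p \<in> earlier_points x y k. 1 < dist c p)"
    for k
  proof (cases "k \<le> \<gamma> 0")
    case True
    then show ?thesis
      using one_far_from_small_set[OF earlier_points_close far[OF True]] by blast
  qed blast
  then obtain z where z: "\<And>k. z k \<in> {x (idx x y k), y (idx x y k)} \<and>
      (k \<le> \<gamma> 0 \<longrightarrow> (\<forall>p \<in> earlier_points x y k. 1 < dist (z k) p))"
    by (metis (no_types, lifting))
  then have z_in: "\<And>k. z k \<in> {x (idx x y k), y (idx x y k)}"
    and z_far: "\<And>k p. k \<le> \<gamma> 0 \<Longrightarrow> p \<in> earlier_points x y k \<Longrightarrow> 1 < dist (z k) p"
    by blast+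
  have "\<forall>n. z n \<in> X"
    using z_in assms(2,3) by (metis empty_iff insert_iff)
  then obtain i j where "i < j" "j \<le> \<gamma> 0" "dist (z i) (z j) \<le> 1"
    using assms(1) unfolding II_modulus_def by (metis of_nat_0 add_0 div_by_1)
  moreover have "z i \<in> earlier_points x y j"
    using z_in[of i] \<open>i < j\<close> by (auto simp: earlier_points_def)
  ultimately show False
    using z_far[of j "z i"] by (simp add: dist_commute)
qed

end
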